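(* Let $\gamma\in(0,1)$, $\mu\in(0,\infty)\setminus\{1\}$. Let $g$ be a concave traveling wave with compact nonempty support and speed $v$, normalized so that $\sup\{x:g(x)>0\}=0$. Let $s=\sup\{\xi:\sup_x\Phi_\xi[g](x)\ge\gamma\}$. Then $v>0$, and $$v=\begin{cases}\dfrac{1-\gamma-\mu s}{1-\mu} & \text{if } v\le s,\\[2mm] 1-\gamma & \text{if } v>s.\end{cases}$$
   Context: Let $\pi(x)=x$ if $x\ge0$ and $\pi(x)=-\infty$ otherwise. Write $x_+=\max(x,0)$ and use $\sup\emptyset=-\infty$. Define $\Phi_\xi[h](x)=1-\gamma-\mu(\xi-x)_++\sup_y(h(y)-|x-y|)$. The dynamics is defined for $n\ge1$ by: - $p_n(x)=\pi[1-\gamma+\sup_y(g_{n-1}(y)-\min(1,\mu)(x-y)_+)]$; - $s_n=\sup\{x:p_n(x)\ge\gamma\}$; - $g_n=\pi\circ\Phi_{s_n}[g_{n-1}]$. A traveling wave with speed $v$ is a $g$ with $g_0=g\Rightarrow g_n(x)=g(x-nv)$ for all $n,x$. The support is $\{g\ge0\}$. *)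

theory Defs
  imports "HOL-Analysis.Analysis" "HOL-Library.Extended_Real"
begin

text \<open>Functions take values in the extended reals; the paper's functions take values
in the reals together with minus infinity. Suprema are taken in ereal, so the supremum
of the empty set is minus infinity.\<close>

definition piE :: "ereal \<Rightarrow> ereal" where
  "piE x = (if x \<ge> 0 then x else -\<infinity>)"

definition Phi :: "real \<Rightarrow> real \<Rightarrow> ereal \<Rightarrow> (real \<Rightarrow> ereal) \<Rightarrow> real \<Rightarrow> ereal" where
  "Phi \<gamma> \<mu> \<xi> h x =
     ereal (1 - \<gamma>) - ereal \<mu> * max (\<xi> - ereal x) 0
     + (SUP y. h y - ereal \<bar>x - y\<bar>)"

definition pfun :: "real \<Rightarrow> real \<Rightarrow> (real \<Rightarrow> ereal) \<Rightarrow> real \<Rightarrow> ereal" where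
  "pfun \<gamma> \<mu> h x = piE (ereal (1 - \<gamma>) + (SUP y. h y - ereal (min 1 \<mu> * max (x - y) 0)))"

definition sfun :: "real \<Rightarrow> real \<Rightarrow> (real \<Rightarrow> ereal) \<Rightarrow> ereal" where
  "sfun \<gamma> \<mu> h = Sup (ereal ` {x. pfun \<gamma> \<mu> h x \<ge> ereal \<gamma>})"

primrec gseq :: "real \<Rightarrow> real \<Rightarrow> (real \<Rightarrow> ereal) \<Rightarrow> nat \<Rightarrow> real \<Rightarrow> ereal" where
  "gseq \<gamma> \<mu> g0 0 = g0"
| "gseq \<gamma> \<mu> g0 (Suc n) =
     (\<lambda>x. piE (Phi \<gamma> \<mu> (sfun \<gamma> \<mu> (gseq \<gamma> \<mu> g0 n)) (gseq \<gamma> \<mu> g0 n) x))"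

definition traveling_wave :: "real \<Rightarrow> real \<Rightarrow> (real \<Rightarrow> ereal) \<Rightarrow> real \<Rightarrow> bool" where
  "traveling_wave \<gamma> \<mu> g v \<longleftrightarrow> (\<forall>n x. gseq \<gamma> \<mu> g n x = g (x - real n * v))"

definition concave_ext :: "(real \<Rightarrow> ereal) \<Rightarrow> bool" where
  "concave_ext g \<longleftrightarrow> convex {(x, r::real). ereal r \<le> g x}"

definition support :: "(real \<Rightarrow> ereal) \<Rightarrow> real set" where
  "support g = {x. g x \<ge> 0}"

end

theory Submission
  imports Defs
begin

text \<open>Writing \<open>G\<close> for the 1-Lipschitz majorant \<open>sup\<^sub>y (g y - |x - y|)\<close>, the wave equation says
\<open>g (x - v) = \<pi>[\<phi> x]\<close> with \<open>\<phi> x = 1 - \<gamma> - \<mu> (s - x)\<^sub>+ + G x\<close>, where \<open>\<phi>\<close> is Lipschitz; the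
level \<open>s\<close> of the statement is the one used by the dynamics, because minimising
\<open>\<mu> (\<xi> - x)\<^sub>+ + |x - y|\<close> over \<open>x\<close> gives \<open>min(1, \<mu>) (\<xi> - y)\<^sub>+\<close>.
Since \<open>{g > 0}\<close> reaches up to \<open>0\<close>, \<open>\<phi>\<close> changes sign at \<open>v\<close>, so \<open>\<phi> v = 0\<close> and \<open>g 0 = 0\<close>; by
concavity \<open>g = -\<infinity>\<close> on \<open>(0, \<infinity>)\<close>, so \<open>G x = G 0 - x\<close> for \<open>x \<ge> 0\<close>. Comparing \<open>\<phi>\<close> with the
maximum of \<open>g\<close> rules out \<open>v \<le> 0\<close>. Then \<open>\<phi>\<close> is affine on an interval ending at \<open>v\<close>, with
slope \<open>-1\<close> if \<open>s < v\<close> and \<open>\<mu> - 1\<close> otherwise, so \<open>g y = -k y\<close> with \<open>0 < k \<le> 1\<close> just left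
of \<open>0\<close>; concavity extends \<open>g y \<le> -k y\<close> to all \<open>y \<le> 0\<close>, giving \<open>G 0 = 0\<close>, and \<open>\<phi> v = 0\<close>
becomes the claimed equation for \<open>v\<close>.\<close>

definition lip_majorant :: "(real \<Rightarrow> ereal) \<Rightarrow> real \<Rightarrow> ereal" where
  "lip_majorant h x = (SUP y. h y - ereal \<bar>x - y\<bar>)"

lemma Phi_lip_majorant:
  "Phi \<gamma> \<mu> \<xi> h x = ereal (1 - \<gamma>) - ereal \<mu> * max (\<xi> - ereal x) 0 + lip_majorant h x"
  by (simp add: Phi_def lip_majorant_def)

lemma lip_majorant_ge: "h y - ereal \<bar>x - y\<bar> \<le> lip_majorant h x"
  unfolding lip_majorant_def by (rule SUP_upper) simp

lemma lip_majorant_le_Sup: "lip_majorant h x \<le> Sup (range h)"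
  unfolding lip_majorant_def
proof (rule SUP_least)
  fix y
  have "h y - ereal \<bar>x - y\<bar> \<le> h y" by (cases "h y") auto
  also have "\<dots> \<le> Sup (range h)" by (rule Sup_upper) simp
  finally show "h y - ereal \<bar>x - y\<bar> \<le> Sup (range h)" .
qed

lemma lip_majorant_Lipschitz: "lip_majorant h x \<le> lip_majorant h y + ereal \<bar>x - y\<bar>"
  unfolding lip_majorant_def[of h x]
proof (rule SUP_least)
  fix z
  have "h z - ereal \<bar>x - z\<bar> \<le> (h z - ereal \<bar>y - z\<bar>) + ereal \<bar>x - y\<bar>"
    by (cases "h z") auto
  also have "\<dots> \<le> lip_majorant h y + ereal \<bar>x - y\<bar>"
    by (intro add_right_mono lip_majorant_ge)
  finally show "h z - ereal \<bar>x - z\<bar> \<le> lip_majorant h y + ereal \<bar>x - y\<bar>" .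
qed

lemma ereal_add_diff_eq: "ereal a + (e - ereal b) = e + ereal (a - b)"
  by (cases e) auto

lemma SUP_add_ereal_attained:
  fixes h :: "'b \<Rightarrow> ereal"
  assumes le: "\<And>x y. a x y \<le> b y" and attained: "\<And>y. \<exists>x. a x y = b y"
  shows "(SUP x. SUP y. h y + ereal (a x y)) = (SUP y. h y + ereal (b y))"
proof (rule antisym)
  show "(SUP x. SUP y. h y + ereal (a x y)) \<le> (SUP y. h y + ereal (b y))"
  proof (intro SUP_least)
    fix x y
    have "h y + ereal (a x y) \<le> h y + ereal (b y)" by (simp add: add_left_mono le)
    also have "\<dots> \<le> (SUP y. h y + ereal (b y))" by (rule SUP_upper) simp
    finally show "h y + ereal (a x y) \<le> (SUP y. h y + ereal (b y))" .
  qed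
  show "(SUP y. h y + ereal (b y)) \<le> (SUP x. SUP y. h y + ereal (a x y))"
  proof (rule SUP_least)
    fix y
    obtain x where "b y = a x y" using attained by metis
    then have "h y + ereal (b y) = h y + ereal (a x y)" by simp
    also have "\<dots> \<le> (SUP y. h y + ereal (a x y))" by (rule SUP_upper) simp
    also have "\<dots> \<le> (SUP x. SUP y. h y + ereal (a x y))" by (rule SUP_upper) simp
    finally show "h y + ereal (b y) \<le> (SUP x. SUP y. h y + ereal (a x y))" .
  qed
qed

lemma min_penalty_le:
  fixes \<mu> \<xi> x y :: real
  assumes "0 < \<mu>"
  shows "min 1 \<mu> * max (\<xi> - y) 0 \<le> \<mu> * max (\<xi> - x) 0 + \<bar>x - y\<bar>"
proof -
  have "min 1 \<mu> * max (\<xi> - y) 0 \<le> min 1 \<mu> * (max (\<xi> - x) 0 + \<bar>x - y\<bar>)"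
    using assms by (intro mult_left_mono) (auto simp: max_def)
  also have "\<dots> \<le> \<mu> * max (\<xi> - x) 0 + \<bar>x - y\<bar>"
  proof (cases "\<mu> \<le> 1")
    case True
    then have "\<mu> * \<bar>x - y\<bar> \<le> 1 * \<bar>x - y\<bar>" by (intro mult_right_mono) auto
    then show ?thesis using True by (simp add: distrib_left min_def)
  next
    case False
    then have "1 * max (\<xi> - x) 0 \<le> \<mu> * max (\<xi> - x) 0" by (intro mult_right_mono) auto
    then show ?thesis using False by (simp add: min_def)
  qed
  finally show ?thesis .
qed

lemma min_penalty_attained:
  fixes \<mu> \<xi> y :: real
  assumes "0 < \<mu>"
  shows "\<exists>x. \<mu> * max (\<xi> - x) 0 + \<bar>x - y\<bar> = min 1 \<mu> * max (\<xi> - y) 0"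
  by (rule exI[of _ "if \<mu> \<le> 1 \<or> \<xi> \<le> y then y else \<xi>"]) (use assms in \<open>auto simp: max_def min_def\<close>)

lemma SUP_Phi_eq:
  assumes "0 < \<mu>"
  shows "(SUP x. Phi \<gamma> \<mu> (ereal \<xi>) h x) = (SUP y. h y + ereal (1 - \<gamma> - min 1 \<mu> * max (\<xi> - y) 0))"
proof -
  have "Phi \<gamma> \<mu> (ereal \<xi>) h x = (SUP y. h y + ereal (1 - \<gamma> - (\<mu> * max (\<xi> - x) 0 + \<bar>x - y\<bar>)))" for x
  proof -
    have "ereal (1 - \<gamma>) - ereal \<mu> * max (ereal \<xi> - ereal x) 0 = ereal (1 - \<gamma> - \<mu> * max (\<xi> - x) 0)"
      by (simp add: max_def)
    then have "Phi \<gamma> \<mu> (ereal \<xi>) h x = ereal (1 - \<gamma> - \<mu> * max (\<xi> - x) 0) + lip_majorant h x"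
      by (simp add: Phi_lip_majorant)
    also have "\<dots> = (SUP y. ereal (1 - \<gamma> - \<mu> * max (\<xi> - x) 0) + (h y - ereal \<bar>x - y\<bar>))"
      unfolding lip_majorant_def by (rule SUP_ereal_add_right[symmetric]) simp_all
    finally show ?thesis by (simp only: ereal_add_diff_eq diff_diff_eq add.assoc)
  qed
  then have "(SUP x. Phi \<gamma> \<mu> (ereal \<xi>) h x)
      = (SUP x. SUP y. h y + ereal (1 - \<gamma> - (\<mu> * max (\<xi> - x) 0 + \<bar>x - y\<bar>)))"
    by simp
  also have "\<dots> = (SUP y. h y + ereal (1 - \<gamma> - min 1 \<mu> * max (\<xi> - y) 0))"
  proof (rule SUP_add_ereal_attained)
    fix x y
    show "1 - \<gamma> - (\<mu> * max (\<xi> - x) 0 + \<bar>x - y\<bar>) \<le> 1 - \<gamma> - min 1 \<mu> * max (\<xi> - y) 0"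
      using min_penalty_le[OF assms, of \<xi> y x] by linarith
  next
    fix y
    show "\<exists>x. 1 - \<gamma> - (\<mu> * max (\<xi> - x) 0 + \<bar>x - y\<bar>) = 1 - \<gamma> - min 1 \<mu> * max (\<xi> - y) 0"
      using min_penalty_attained[OF assms, of \<xi> y] by metis
  qed
  finally show ?thesis .
qed

lemma sfun_eq_Sup_Phi:
  assumes "0 < \<gamma>" "0 < \<mu>"
  shows "sfun \<gamma> \<mu> h = Sup (ereal ` {\<xi>. ereal \<gamma> \<le> (SUP x. Phi \<gamma> \<mu> (ereal \<xi>) h x)})"
proof -
  have "pfun \<gamma> \<mu> h \<xi> = piE (SUP x. Phi \<gamma> \<mu> (ereal \<xi>) h x)" for \<xi>
    unfolding pfun_def SUP_Phi_eq[OF assms(2)]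
    by (simp add: SUP_ereal_add_right[symmetric] ereal_add_diff_eq)
  moreover have "ereal \<gamma> \<le> piE e \<longleftrightarrow> ereal \<gamma> \<le> e" for e
  proof -
    have "0 \<le> e" if "ereal \<gamma> \<le> e" using order_trans[OF _ that, of 0] assms(1) by simp
    then show ?thesis by (auto simp: piE_def)
  qed
  ultimately show ?thesis unfolding sfun_def by simp
qed

lemma concave_extD:
  assumes "concave_ext g" "ereal a \<le> g x" "ereal b \<le> g y" "0 \<le> l" "l \<le> 1"
  shows "ereal (l * a + (1 - l) * b) \<le> g (l * x + (1 - l) * y)"
proof -
  have "l *\<^sub>R (x, a) + (1 - l) *\<^sub>R (y, b) \<in> {(x, r::real). ereal r \<le> g x}"
    using assms by (intro assms(1)[unfolded concave_ext_def convex_def, rule_format]) auto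
  then show ?thesis by simp
qed

lemma concave_ext_le_secant:
  assumes "concave_ext g" "ereal 0 \<le> g 0" "g y0 \<le> ereal (c * y0)" "y < y0" "y0 < 0"
  shows "g y \<le> ereal (c * y)"
proof (rule ccontr)
  assume "\<not> g y \<le> ereal (c * y)"
  then obtain r where r: "c * y < r" "ereal r \<le> g y"
    using ereal_dense2[of "ereal (c * y)" "g y"] by (auto simp: not_le)
  define l where "l = y0 / y"
  have l: "0 < l" "l \<le> 1" "l * y + (1 - l) * 0 = y0"
    using assms(4,5) by (auto simp: l_def field_simps)
  have "ereal (l * r + (1 - l) * 0) \<le> g (l * y + (1 - l) * 0)"
    using r l assms(2) by (intro concave_extD[OF assms(1)]) auto
  then have "ereal (l * r) \<le> ereal (c * y0)" using l assms(3) by (metis mult_zero_right add_0_right order_trans)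
  moreover have "c * y0 = l * (c * y)" using assms(4,5) by (simp add: l_def)
  moreover have "l * (c * y) < l * r" using l r by simp
  ultimately show False by simp
qed

lemma Lipschitz_zero_at_sign_change:
  fixes f :: "real \<Rightarrow> real"
  assumes lip: "\<And>x y. f x \<le> f y + L * \<bar>x - y\<bar>" and "0 \<le> L"
    and right: "\<And>x. v < x \<Longrightarrow> f x \<le> 0"
    and left: "\<And>e. 0 < e \<Longrightarrow> \<exists>x. v - e < x \<and> x \<le> v \<and> 0 < f x"
  shows "f v = 0"
proof -
  have eps: "f v \<le> e \<and> - f v \<le> e" if "0 < e" for e
  proof
    define d where "d = e / (L + 1)"
    have d: "0 < d" "L * d \<le> e" using that \<open>0 \<le> L\<close> by (auto simp: d_def field_simps)
    have "f v \<le> f (v + d) + L * \<bar>v - (v + d)\<bar>" by (rule lip)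
    then show "f v \<le> e" using right[of "v + d"] d by simp
    obtain x where x: "v - d < x" "x \<le> v" "0 < f x" using left[OF d(1)] by blast
    have "L * \<bar>x - v\<bar> \<le> L * d" using x \<open>0 \<le> L\<close> by (intro mult_left_mono) auto
    then show "- f v \<le> e" using lip[of x v] x d by simp
  qed
  have "f v \<le> 0" by (rule field_le_epsilon) (use eps in simp)
  moreover have "- f v \<le> 0" by (rule field_le_epsilon) (use eps in simp)
  ultimately show ?thesis by simp
qed

locale concave_wave =
  fixes \<gamma> \<mu> v :: real and g :: "real \<Rightarrow> ereal"
  assumes gamma_pos: "0 < \<gamma>" and gamma_less_1: "\<gamma> < 1" and mu_pos: "0 < \<mu>"
    and g_not_PInf: "\<And>x. g x \<noteq> \<infinity>"
    and concave: "concave_ext g"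
    and bounded_support: "bounded (support g)"
    and wave: "traveling_wave \<gamma> \<mu> g v"
    and Sup_positive_part: "Sup (ereal ` {x. 0 < g x}) = 0"
begin

abbreviation s :: ereal where "s \<equiv> sfun \<gamma> \<mu> g"

lemma wave_step: "g (x - v) = piE (Phi \<gamma> \<mu> s g x)"
proof -
  have "gseq \<gamma> \<mu> g 1 x = g (x - real 1 * v)" using wave unfolding traveling_wave_def by blast
  then show ?thesis by simp
qed

lemma nonneg_or_MInf: "g y = -\<infinity> \<or> 0 \<le> g y"
  using wave_step[of "y + v"] by (auto simp: piE_def)

lemma pos_imp_nonpos:
  assumes "0 < g t" shows "t \<le> 0"
proof -
  have "ereal t \<le> Sup (ereal ` {x. 0 < g x})" using assms by (intro Sup_upper) auto
  then show ?thesis using Sup_positive_part by simp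
qed

lemma pos_near_0:
  assumes "0 < e" obtains t where "0 < g t" "- e < t" "t \<le> 0"
proof -
  have "ereal (- e) < Sup (ereal ` {x. 0 < g x})" using assms Sup_positive_part by simp
  then obtain t where "0 < g t" "- e < t" by (auto simp: less_Sup_iff)
  then show ?thesis using that pos_imp_nonpos by blast
qed

lemma lip_majorant_not_MInf: "lip_majorant g x \<noteq> -\<infinity>"
proof -
  obtain t where "0 < g t" using pos_near_0[of 1] by auto
  then have "-\<infinity> < g t - ereal \<bar>x - t\<bar>" using g_not_PInf[of t] by (cases "g t") auto
  also have "\<dots> \<le> lip_majorant g x" by (rule lip_majorant_ge)
  finally show ?thesis by simp
qed

lemma lip_majorant_not_PInf: "lip_majorant g x \<noteq> \<infinity>"
proof
  assume "lip_majorant g x = \<infinity>"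
  then have "g (x - v) = \<infinity>" using wave_step[of x] by (simp add: Phi_lip_majorant piE_def)
  then show False using g_not_PInf by simp
qed

definition G :: "real \<Rightarrow> real" where
  "G x = real_of_ereal (lip_majorant g x)"

lemma lip_majorant_eq_G: "lip_majorant g x = ereal (G x)"
  using lip_majorant_not_MInf[of x] lip_majorant_not_PInf[of x] unfolding G_def
  by (cases "lip_majorant g x") auto

lemma G_ge: "g y = ereal r \<Longrightarrow> r - \<bar>x - y\<bar> \<le> G x"
  using lip_majorant_ge[of g y x] by (simp add: lip_majorant_eq_G)

lemma G_Lipschitz: "G x \<le> G y + \<bar>x - y\<bar>"
  using lip_majorant_Lipschitz[of g x y] by (simp add: lip_majorant_eq_G)

lemma s_not_PInf: "s \<noteq> \<infinity>"
proof
  assume "s = \<infinity>"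
  obtain t where "0 < g t" using pos_near_0[of 1] by auto
  moreover have "g t = -\<infinity>"
    using wave_step[of "t + v"] \<open>s = \<infinity>\<close> mu_pos by (simp add: Phi_lip_majorant lip_majorant_eq_G piE_def)
  ultimately show False by simp
qed

definition q :: "real \<Rightarrow> real" where
  "q x = (if s = -\<infinity> then 0 else \<mu> * max (real_of_ereal s - x) 0)"

definition \<phi> :: "real \<Rightarrow> real" where
  "\<phi> x = 1 - \<gamma> - q x + G x"

lemma wave_step_\<phi>: "g (x - v) = piE (ereal (\<phi> x))"
proof -
  have "Phi \<gamma> \<mu> s g x = ereal (\<phi> x)"
    unfolding Phi_lip_majorant lip_majorant_eq_G \<phi>_def q_def
    using s_not_PInf by (cases s) (auto simp: max_def)
  then show ?thesis using wave_step by simp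
qed

lemma q_eq_0: "s \<le> ereal x \<Longrightarrow> q x = 0"
  by (cases s) (auto simp: q_def)

lemma q_eq: "s = ereal r \<Longrightarrow> x \<le> r \<Longrightarrow> q x = \<mu> * (r - x)"
  by (simp add: q_def)

lemma q_Lipschitz: "\<bar>q x - q y\<bar> \<le> \<mu> * \<bar>x - y\<bar>"
proof -
  have "\<bar>\<mu> * max (a - x) 0 - \<mu> * max (a - y) 0\<bar> \<le> \<mu> * \<bar>x - y\<bar>" for a
  proof -
    have "\<bar>\<mu> * max (a - x) 0 - \<mu> * max (a - y) 0\<bar> = \<mu> * \<bar>max (a - x) 0 - max (a - y) 0\<bar>"
      using mu_pos by (simp add: right_diff_distrib[symmetric] abs_mult)
    also have "\<dots> \<le> \<mu> * \<bar>x - y\<bar>" using mu_pos by (intro mult_left_mono) (auto simp: max_def)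
    finally show ?thesis .
  qed
  then show ?thesis using mu_pos by (auto simp: q_def)
qed

lemma \<phi>_Lipschitz: "\<phi> x \<le> \<phi> y + (1 + \<mu>) * \<bar>x - y\<bar>"
  using q_Lipschitz[of x y] G_Lipschitz[of x y] unfolding \<phi>_def by (simp add: distrib_right)

lemma \<phi>_nonpos_right:
  assumes "v < x" shows "\<phi> x \<le> 0"
proof (rule ccontr)
  assume "\<not> \<phi> x \<le> 0"
  then have "0 < g (x - v)" using wave_step_\<phi>[of x] by (simp add: piE_def)
  then show False using pos_imp_nonpos[of "x - v"] assms by simp
qed

lemma \<phi>_pos_near_v:
  assumes "0 < e" shows "\<exists>x. v - e < x \<and> x \<le> v \<and> 0 < \<phi> x"
proof -
  obtain t where t: "0 < g t" "- e < t" "t \<le> 0" using pos_near_0[OF assms] by blast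
  then have "0 < \<phi> (t + v)" using wave_step_\<phi>[of "t + v"] by (auto simp: piE_def split: if_splits)
  then show ?thesis using t by (intro exI[of _ "t + v"]) auto
qed

lemma \<phi>_v_eq_0: "\<phi> v = 0"
  using mu_pos
  by (intro Lipschitz_zero_at_sign_change[OF \<phi>_Lipschitz _ \<phi>_nonpos_right \<phi>_pos_near_v]) auto

lemma g_0_eq_0: "g 0 = 0"
  using wave_step_\<phi>[of v] \<phi>_v_eq_0 by (simp add: piE_def)

lemma g_eq_MInf_right:
  assumes "0 < y" shows "g y = -\<infinity>"
proof (rule ccontr)
  assume "g y \<noteq> -\<infinity>"
  then have gy: "ereal 0 \<le> g y" using nonneg_or_MInf[of y] by (simp add: zero_ereal_def)
  obtain t where t: "0 < g t" "t \<le> 0" using pos_near_0[of 1] by auto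
  then obtain r where r: "g t = ereal r" "0 < r" using g_not_PInf[of t] by (cases "g t") auto
  define l where "l = y / (2 * (y - t))"
  have "0 < y - t" using assms t(2) by simp
  then have l: "0 < l" "l \<le> 1" "l * (y - t) = y / 2"
    using assms t(2) by (auto simp: l_def field_simps)
  then have "l * t + (1 - l) * y = y / 2" by (simp add: algebra_simps)
  have "ereal (l * r + (1 - l) * 0) \<le> g (l * t + (1 - l) * y)"
    using r gy l by (intro concave_extD[OF concave]) auto
  then have "ereal (l * r) \<le> g (y / 2)" using \<open>l * t + (1 - l) * y = y / 2\<close> by simp
  moreover have "0 < l * r" using l r by simp
  ultimately have "0 < g (y / 2)" by (metis ereal_less(2) order_less_le_trans)
  then show False using pos_imp_nonpos[of "y / 2"] assms by simp
qed

lemma G_0_nonneg: "0 \<le> G 0"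
  using G_ge[of 0 0 0] g_0_eq_0 by (simp add: zero_ereal_def)

lemma G_right:
  assumes "0 \<le> x" shows "G x = G 0 - x"
proof -
  have "lip_majorant g x \<le> ereal (G 0 - x)" unfolding lip_majorant_def
  proof (rule SUP_least)
    fix y
    show "g y - ereal \<bar>x - y\<bar> \<le> ereal (G 0 - x)"
    proof (cases "g y")
      case (real r)
      then have "y \<le> 0" using g_eq_MInf_right[of y] by force
      moreover have "r - \<bar>0 - y\<bar> \<le> G 0" using G_ge real by blast
      ultimately show ?thesis using real assms by simp
    qed (use g_not_PInf in auto)
  qed
  moreover have "G 0 \<le> G x + \<bar>0 - x\<bar>" by (rule G_Lipschitz)
  ultimately show ?thesis using assms by (simp add: lip_majorant_eq_G)
qed

lemma Sup_range_g: obtains M where "Sup (range g) = ereal M" "0 < M"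
proof -
  obtain B where B: "\<And>y. y \<in> support g \<Longrightarrow> \<bar>y\<bar> \<le> B"
    using bounded_support unfolding bounded_real by auto
  have "g y \<le> ereal (G 0 + B)" for y
  proof (cases "g y")
    case (real r)
    then have "\<bar>y\<bar> \<le> B" using B nonneg_or_MInf[of y] by (auto simp: support_def)
    moreover have "r - \<bar>0 - y\<bar> \<le> G 0" using G_ge real by blast
    ultimately show ?thesis using real by simp
  qed (use g_not_PInf in auto)
  then have "Sup (range g) \<le> ereal (G 0 + B)" by (intro Sup_least) auto
  moreover obtain t where "0 < g t" using pos_near_0[of 1] by auto
  moreover have "g t \<le> Sup (range g)" by (rule Sup_upper) simp
  ultimately show ?thesis using that
    by (cases "Sup (range g)") (auto simp: zero_ereal_def dest: order_less_le_trans)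
qed

lemma s_large_if_v_nonpos:
  assumes "v \<le> 0" obtains r where "s = ereal r" "1 - \<gamma> + G 0 \<le> \<mu> * r"
proof -
  have \<phi>0: "\<phi> 0 \<le> 0" using \<phi>_nonpos_right[of 0] \<phi>_v_eq_0 assms by (cases "v = 0") auto
  show ?thesis
  proof (cases "s \<le> ereal 0")
    case True
    then show ?thesis using \<phi>0 q_eq_0 G_0_nonneg gamma_less_1 by (simp add: \<phi>_def)
  next
    case False
    then obtain r where "s = ereal r" "0 < r" using s_not_PInf by (cases s) auto
    then show ?thesis using that \<phi>0 q_eq[of r 0] by (simp add: \<phi>_def)
  qed
qed

text \<open>If \<open>v \<le> 0\<close>, a value of \<open>g\<close> within \<open>e\<close> of its maximum \<open>M\<close> is \<open>\<phi> x\<close> for some \<open>x \<le> 0\<close>,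
  where \<open>\<phi> x \<le> G x - G 0 + \<mu> x\<close>; with \<open>G x \<le> M\<close> and \<open>G x \<le> G 0 - x\<close> this forces both
  \<open>-\<mu> x < e\<close> and \<open>M - e < -x\<close>, which is impossible for \<open>e = \<mu> M / (1 + \<mu>)\<close>.\<close>

lemma v_pos: "0 < v"
proof (rule ccontr)
  assume "\<not> 0 < v"
  then obtain r where s: "s = ereal r" and large: "1 - \<gamma> + G 0 \<le> \<mu> * r"
    using s_large_if_v_nonpos by force
  obtain M where M: "Sup (range g) = ereal M" "0 < M" by (rule Sup_range_g)
  define e where "e = \<mu> * M / (1 + \<mu>)"
  have e: "0 < e" "e < M" "e * (1 + \<mu>) = \<mu> * M"
    using mu_pos M(2) by (auto simp: e_def field_simps)
  then have "ereal (M - e) < Sup (range g)" using M by simp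
  then obtain y where y: "ereal (M - e) < g y" by (auto simp: less_Sup_iff)
  then have "0 < g y" using order_less_trans[of 0 "ereal (M - e)" "g y"] e by simp
  then have "y \<le> 0" by (rule pos_imp_nonpos)
  define x where "x = y + v"
  have x: "x \<le> 0" using \<open>y \<le> 0\<close> \<open>\<not> 0 < v\<close> by (simp add: x_def)
  have "M - e < \<phi> x" using y wave_step_\<phi>[of x] by (auto simp: x_def piE_def split: if_splits)
  moreover have "0 < r" using zero_less_mult_pos[of \<mu> r] large G_0_nonneg gamma_less_1 mu_pos by linarith
  ultimately have close: "M - e < G x - G 0 + \<mu> * x"
    using large q_eq[OF s, of x] x by (simp add: \<phi>_def algebra_simps)
  have "G x \<le> M" using lip_majorant_le_Sup[of g x] M by (simp add: lip_majorant_eq_G)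
  then have "- \<mu> * x < e" using close G_0_nonneg by simp
  moreover have "\<mu> * x \<le> 0" using mu_pos x by (simp add: mult_nonneg_nonpos)
  then have "M - e < - x" using close G_Lipschitz[of x 0] x by simp
  then have "\<mu> * (M - e) < \<mu> * (- x)" using mu_pos by (rule mult_strict_left_mono)
  ultimately have "\<mu> * M < e * (1 + \<mu>)" by (simp add: algebra_simps)
  then show False using e by simp
qed

lemma \<phi>_eq_if_s_less_v:
  assumes "s < ereal v" "max 0 (real_of_ereal s) \<le> x" shows "\<phi> x = v - x"
proof -
  have \<phi>_right: "\<phi> y = 1 - \<gamma> + G 0 - y" if "max 0 (real_of_ereal s) \<le> y" for y
    using that q_eq_0[of y] G_right[of y] s_not_PInf by (cases s) (auto simp: \<phi>_def)
  have "max 0 (real_of_ereal s) \<le> v" using assms(1) v_pos s_not_PInf by (cases s) auto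
  then show ?thesis using \<phi>_right[OF assms(2)] \<phi>_right[of v] \<phi>_v_eq_0 by simp
qed

lemma \<phi>_eq_if_v_le_s:
  assumes "s = ereal r" "v \<le> r" "0 \<le> x" "x \<le> v" shows "\<phi> x = (1 - \<mu>) * (v - x)"
  using q_eq[OF assms(1), of x] q_eq[OF assms(1), of v] G_right[of x] G_right[of v] \<phi>_v_eq_0 assms v_pos
  by (simp add: \<phi>_def algebra_simps)

lemma mu_less_1_if_v_le_s:
  assumes "ereal v \<le> s" shows "\<mu> < 1"
proof -
  obtain r where r: "s = ereal r" "v \<le> r" using assms s_not_PInf by (cases s) auto
  obtain t where t: "0 < g t" "- v < t" "t \<le> 0" using pos_near_0[OF v_pos] by blast
  have "\<phi> (t + v) = (1 - \<mu>) * (- t)" using \<phi>_eq_if_v_le_s[OF r, of "t + v"] t by simp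
  moreover have "0 < \<phi> (t + v)" using t(1) wave_step_\<phi>[of "t + v"] by (auto simp: piE_def split: if_splits)
  ultimately have "0 < (1 - \<mu>) * (- t)" by simp
  then show ?thesis using t(3) unfolding zero_less_mult_iff by linarith
qed

lemma g_linear_if_\<phi>_linear:
  assumes "\<And>x. a \<le> x \<Longrightarrow> x \<le> v \<Longrightarrow> \<phi> x = k * (v - x)" "0 \<le> k" "a - v \<le> y" "y \<le> 0"
  shows "g y = ereal (- k * y)"
  using assms(1)[of "y + v"] assms(2-4) wave_step_\<phi>[of "y + v"]
  by (simp add: piE_def mult_nonneg_nonpos)

lemma g_linear_near_0:
  obtains k y0 where "0 < k" "k \<le> 1" "y0 < 0" "\<And>y. y0 \<le> y \<Longrightarrow> y \<le> 0 \<Longrightarrow> g y = ereal (- k * y)"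
proof (cases "s < ereal v")
  case True
  define a where "a = max 0 (real_of_ereal s)"
  have "a < v" using True v_pos s_not_PInf by (cases s) (auto simp: a_def)
  then show ?thesis
    using that[of 1 "a - v"] g_linear_if_\<phi>_linear[of a 1] \<phi>_eq_if_s_less_v[OF True] by (auto simp: a_def)
next
  case False
  then obtain r where r: "s = ereal r" "v \<le> r" using s_not_PInf by (cases s) auto
  then have "\<mu> < 1" using mu_less_1_if_v_le_s by simp
  then show ?thesis
    using that[of "1 - \<mu>" "- v"] g_linear_if_\<phi>_linear[of 0 "1 - \<mu>"] \<phi>_eq_if_v_le_s[OF r] mu_pos v_pos
    by auto
qed

lemma G_0_eq_0: "G 0 = 0"
proof -
  obtain k y0 where k: "0 < k" "k \<le> 1" "y0 < 0"
    and lin: "\<And>y. y0 \<le> y \<Longrightarrow> y \<le> 0 \<Longrightarrow> g y = ereal (- k * y)"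
    using g_linear_near_0 by blast
  have secant: "g y \<le> ereal (- k * y)" if "y \<le> 0" for y
  proof (cases "y0 \<le> y")
    case False
    then show ?thesis
      using concave_ext_le_secant[OF concave, of y0 "- k" y] lin[of y0] g_0_eq_0 k by simp
  qed (use lin that in simp)
  have "g y - ereal \<bar>0 - y\<bar> \<le> ereal 0" for y
  proof (cases "y \<le> 0")
    case True
    have "g y - ereal \<bar>0 - y\<bar> \<le> ereal (- k * y) - ereal \<bar>0 - y\<bar>"
      using secant[OF True] by (rule ereal_minus_mono) simp
    also have "\<dots> \<le> ereal 0" using True k by (simp add: mult_le_cancel_right1 mult_nonpos_nonpos)
    finally show ?thesis .
  qed (simp add: g_eq_MInf_right)
  then have "lip_majorant g 0 \<le> ereal 0" unfolding lip_majorant_def by (rule SUP_least)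
  then show ?thesis using G_0_nonneg by (simp add: lip_majorant_eq_G)
qed

lemma v_eq_if_v_le_s:
  assumes "ereal v \<le> s" shows "v = (1 - \<gamma> - \<mu> * real_of_ereal s) / (1 - \<mu>)"
proof -
  obtain r where r: "s = ereal r" "v \<le> r" using assms s_not_PInf by (cases s) auto
  have "1 - \<gamma> - \<mu> * (r - v) - v = 0"
    using \<phi>_v_eq_0 q_eq[OF r] G_right[of v] v_pos G_0_eq_0 by (simp add: \<phi>_def)
  then show ?thesis using r mu_less_1_if_v_le_s[OF assms] by (simp add: field_simps)
qed

lemma v_eq_if_s_less_v: "s < ereal v \<Longrightarrow> v = 1 - \<gamma>"
  using \<phi>_v_eq_0 q_eq_0[of v] G_right[of v] v_pos G_0_eq_0 by (simp add: \<phi>_def)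

end

theorem lemmaS3p4:
  fixes \<gamma> \<mu> v :: real and g :: "real \<Rightarrow> ereal"
  assumes "0 < \<gamma>" "\<gamma> < 1" "0 < \<mu>" "\<mu> \<noteq> 1"
    and "\<forall>x. g x \<noteq> \<infinity>"
    and "concave_ext g"
    and "compact (support g)" "support g \<noteq> {}"
    and "traveling_wave \<gamma> \<mu> g v"
    and "Sup (ereal ` {x. g x > 0}) = 0"
  shows "v > 0 \<and>
    (let s = Sup (ereal ` {\<xi>. (SUP x. Phi \<gamma> \<mu> (ereal \<xi>) g x) \<ge> ereal \<gamma>}) in
      (ereal v \<le> s \<longrightarrow> s \<noteq> \<infinity> \<and> v = (1 - \<gamma> - \<mu> * real_of_ereal s) / (1 - \<mu>)) \<and>
      (s < ereal v \<longrightarrow> v = 1 - \<gamma>))"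
proof -
  interpret concave_wave \<gamma> \<mu> v g
    using assms by unfold_locales (auto intro: compact_imp_bounded)
  have "Sup (ereal ` {\<xi>. (SUP x. Phi \<gamma> \<mu> (ereal \<xi>) g x) \<ge> ereal \<gamma>}) = s"
    using sfun_eq_Sup_Phi[OF assms(1,3)] by simp
  then show ?thesis using v_pos v_eq_if_v_le_s v_eq_if_s_less_v s_not_PInf by (simp add: Let_def)
qed

end
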